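(* Let $d\in\{1,2,3,7,11\}$, $K=\mathbb{Q}(\sqrt{-d})$, $\mathcal{O}_d$ its ring of integers, $\Delta$ a positive integer not of the form $\beta\bar\beta$ with $\beta\in\mathcal{O}_d$, $k\ge1$ odd, and $$P_{k,\Delta}(z,\bar z)=\sum_{\substack{(a,b,c)\in\mathbb{Z}\times\mathcal{O}_d\times\mathbb{Z}\\ b\bar b-ac=\Delta,\ c<0<a}}\left(az\bar z+bz+\bar b\bar z+c\right)^k .$$ Let $\varepsilon=\begin{psmallmatrix}-1&0\\0&1\end{psmallmatrix}$, $S=\begin{psmallmatrix}0&-1\\1&0\end{psmallmatrix}$, $T=\begin{psmallmatrix}1&1\\0&1\end{psmallmatrix}$. Then: (1) $P_{k,\Delta}(\bar z,z)=P_{k,\Delta}(z,\bar z)$; (2) $P_{k,\Delta}(uz,\bar u\bar z)=P_{k,\Delta}(z,\bar z)$ for every unit $u\in\mathcal{O}_d$; (3) $P_{k,\Delta}|(\mathbf{1}+S)=0$; (4) $P_{k,\Delta}|(\mathbf{1}+TS\varepsilon-T)=0$; (5) if $d=7$, then with $\omega=\frac{1+\sqrt{-7}}{2}$ and $T_\omega=\begin{psmallmatrix}1&\omega\\0&1\end{psmallmatrix}$, $$P_{k,\Delta}|(\mathbf{1}-T_\omega-ST^{-1}T_\omega S-TT_\omega^{-1}ST_\omega)=0.$$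
   Context: Polynomials are in the independent variables $z,\bar z$. For a polynomial $P(z,\bar z)$ of degree at most $k$ in each variable and $\gamma=\begin{psmallmatrix}a&b\\c&e\end{psmallmatrix}\in\mathbf{GL}(2,\mathbb{C})$, $(P|\gamma)(z,\bar z)=(cz+e)^k\overline{(cz+e)}^kP\!\left(\frac{az+b}{cz+e},\frac{\bar a\bar z+\bar b}{\bar c\bar z+\bar e}\right)$; this is a right action ($P|(\gamma_1\gamma_2)=(P|\gamma_1)|\gamma_2$) extended linearly to the group ring, $\mathbf{1}$ is the identity matrix. *)

theory Defs
  imports "HOL-Analysis.Analysis"
begin

definition mat2 :: "complex \<Rightarrow> complex \<Rightarrow> complex \<Rightarrow> complex \<Rightarrow> complex^2^2" where
  "mat2 a b c e = (\<chi> i j. if i = 1 then (if j = 1 then a else b) else (if j = 1 then c else e))"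

text \<open>Generator omega_d of the ring of integers of Q(sqrt(-d)) (d squarefree positive).\<close>
definition omega_d :: "nat \<Rightarrow> complex" where
  "omega_d d = (if d mod 4 = 3 then (1 + \<i> * of_real (sqrt (real d))) / 2
               else \<i> * of_real (sqrt (real d)))"

definition Od :: "nat \<Rightarrow> complex set" where
  "Od d = {of_int x + of_int y * omega_d d | x y. True}"

definition units_Od :: "nat \<Rightarrow> complex set" where
  "units_Od d = {u \<in> Od d. u \<noteq> 0 \<and> inverse u \<in> Od d}"

text \<open>Polynomials in the independent variables z, zbar are represented as functions of
  two complex variables (z, w), w playing the role of zbar.\<close>
definition Pidx :: "nat \<Rightarrow> int \<Rightarrow> (int \<times> complex \<times> int) set" where
  "Pidx d \<Delta> = {(a, b, c). b \<in> Od d \<and> b * cnj b - of_int a * of_int c = of_int \<Delta> \<and> c < 0 \<and> 0 < a}"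

definition Pk :: "nat \<Rightarrow> nat \<Rightarrow> int \<Rightarrow> complex \<Rightarrow> complex \<Rightarrow> complex" where
  "Pk d k \<Delta> z w =
     (\<Sum>(a, b, c) \<in> Pidx d \<Delta>. (of_int a * z * w + b * z + cnj b * w + of_int c) ^ k)"

text \<open>Slash action of weight (k,k); the formula is used at points where it is defined.\<close>
definition slash :: "nat \<Rightarrow> complex^2^2 \<Rightarrow> (complex \<Rightarrow> complex \<Rightarrow> complex) \<Rightarrow> complex \<Rightarrow> complex \<Rightarrow> complex" where
  "slash k g P z w =
     (let a = g$1$1; b = g$1$2; c = g$2$1; e = g$2$2 in
      (c * z + e) ^ k * (cnj c * w + cnj e) ^ k *
      P ((a * z + b) / (c * z + e)) ((cnj a * w + cnj b) / (cnj c * w + cnj e)))"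

definition regular_at :: "complex^2^2 \<Rightarrow> complex \<Rightarrow> complex \<Rightarrow> bool" where
  "regular_at g z w \<longleftrightarrow> g$2$1 * z + g$2$2 \<noteq> 0 \<and> cnj (g$2$1) * w + cnj (g$2$2) \<noteq> 0"

definition epsM :: "complex^2^2" where "epsM = mat2 (-1) 0 0 1"
definition SM :: "complex^2^2" where "SM = mat2 0 (-1) 1 0"
definition TM :: "complex^2^2" where "TM = mat2 1 1 0 1"
definition TMinv :: "complex^2^2" where "TMinv = mat2 1 (-1) 0 1"
definition Tw :: "complex \<Rightarrow> complex^2^2" where "Tw x = mat2 1 x 0 1"
definition Twinv :: "complex \<Rightarrow> complex^2^2" where "Twinv x = mat2 1 (-x) 0 1"

end

theory Submission
  imports Defs
begin

(* A triple (A, B, C) in Z x O_d x Z with |B|^2 - AC = Delta is an integral binary Hermitian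
   form of discriminant Delta, and P_{k,Delta} is the sum of the k-th powers of the forms that
   are positive at the cusp infinity and negative at the cusp 0. A matrix g over O_d with
   unimodular determinant acts on such forms by Q -> Q o g, and slashing with g replaces the two
   cusps by their images under g^-1. Since Delta is not a norm, no form vanishes at a cusp (x : y)
   with x or y a unit; for odd k the sums over forms with prescribed signs at two such cusps
   therefore satisfy P(a, b) + P(b, c) = P(a, c), the extra forms cancelling in pairs Q, -Q.
   The three slash identities are combinations of these relations for the cusps infinity, 0, -1,
   -omega and -1/(1 - omega); the two symmetries are reindexings by B -> conj B and B -> B u. *)

section \<open>The ring of integers\<close>

lemma OdI: "b = of_int x + of_int y * omega_d d \<Longrightarrow> b \<in> Od d"
  by (auto simp: Od_def)

lemma OdE:
  assumes "b \<in> Od d"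
  obtains x y :: int where "b = of_int x + of_int y * omega_d d"
  using assms by (auto simp: Od_def)

lemma omega_d_add_cnj: "omega_d d + cnj (omega_d d) = (if d mod 4 = 3 then 1 else 0)"
  by (simp add: omega_d_def complex_eq_iff)

lemma omega_d_mult_cnj:
  "omega_d d * cnj (omega_d d) = of_nat (if d mod 4 = 3 then (d + 1) div 4 else d)"
proof (cases "d mod 4 = 3")
  case True
  then have "(d + 1) div 4 * 4 = d + 1" by presburger
  then have "real ((d + 1) div 4) * 4 = real d + 1"
    by (metis of_nat_1 of_nat_add of_nat_mult of_nat_numeral)
  with True show ?thesis
    by (simp add: omega_d_def complex_eq_iff field_simps power2_eq_square)
next
  case False
  then show ?thesis by (simp add: omega_d_def complex_eq_iff)
qed

lemma omega_d_trace_norm: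
  obtains t n :: int
  where "omega_d d + cnj (omega_d d) = of_int t" "omega_d d * cnj (omega_d d) = of_int n"
proof
  show "omega_d d + cnj (omega_d d) = of_int (if d mod 4 = 3 then 1 else 0)"
    by (simp add: omega_d_add_cnj)
  show "omega_d d * cnj (omega_d d) = of_int (int (if d mod 4 = 3 then (d + 1) div 4 else d))"
    by (simp only: omega_d_mult_cnj of_int_of_nat_eq)
qed

lemma Od_of_int [simp]: "of_int n \<in> Od d"
  by (rule OdI[of _ n 0]) simp

lemma Od_omega_d [simp]: "omega_d d \<in> Od d"
  by (rule OdI[of _ 0 1]) simp

lemma Od_0 [simp]: "0 \<in> Od d" and Od_1 [simp]: "1 \<in> Od d"
  using Od_of_int[of 0 d] Od_of_int[of 1 d] by simp_all

lemma Od_add [simp]: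
  assumes "a \<in> Od d" "b \<in> Od d"
  shows "a + b \<in> Od d"
proof -
  obtain x y u v :: int
    where "a = of_int x + of_int y * omega_d d" "b = of_int u + of_int v * omega_d d"
    using assms by (meson OdE)
  then show ?thesis
    by (intro OdI[of _ "x + u" "y + v"]) (simp add: algebra_simps)
qed

lemma Od_uminus [simp]:
  assumes "a \<in> Od d"
  shows "- a \<in> Od d"
proof -
  obtain x y :: int where "a = of_int x + of_int y * omega_d d"
    using assms by (meson OdE)
  then show ?thesis
    by (intro OdI[of _ "- x" "- y"]) (simp add: algebra_simps)
qed

lemma Od_diff [simp]: "a \<in> Od d \<Longrightarrow> b \<in> Od d \<Longrightarrow> a - b \<in> Od d"
  using Od_add[of a d "- b"] by simp

lemma Od_mult [simp]:
  assumes "a \<in> Od d" "b \<in> Od d"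
  shows "a * b \<in> Od d"
proof -
  obtain x y u v :: int
    where ab: "a = of_int x + of_int y * omega_d d" "b = of_int u + of_int v * omega_d d"
    using assms by (meson OdE)
  obtain t n :: int
    where tn: "omega_d d + cnj (omega_d d) = of_int t" "omega_d d * cnj (omega_d d) = of_int n"
    by (rule omega_d_trace_norm)
  have sq: "omega_d d * omega_d d = of_int t * omega_d d - of_int n"
    by (simp flip: tn add: algebra_simps)
  have "a * b = of_int (x * u) + of_int (x * v + y * u) * omega_d d
      + of_int (y * v) * (omega_d d * omega_d d)"
    by (simp add: ab algebra_simps)
  also have "\<dots> = of_int (x * u - y * v * n) + of_int (x * v + y * u + y * v * t) * omega_d d"
    by (simp add: sq algebra_simps)
  finally show ?thesis by (rule OdI)
qed

lemma Od_cnj [simp]: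
  assumes "a \<in> Od d"
  shows "cnj a \<in> Od d"
proof -
  obtain x y :: int where a: "a = of_int x + of_int y * omega_d d"
    using assms by (meson OdE)
  obtain t :: int where "omega_d d + cnj (omega_d d) = of_int t"
    using omega_d_trace_norm by metis
  then have "cnj (omega_d d) = of_int t - omega_d d" by (metis add_diff_cancel_left')
  then have "cnj a = of_int x + of_int y * (of_int t - omega_d d)"
    by (simp add: a)
  also have "\<dots> = of_int (x + y * t) + of_int (- y) * omega_d d"
    by (simp add: algebra_simps)
  finally show ?thesis by (rule OdI)
qed

lemma Od_real_Ints:
  assumes "z \<in> Od d" "Im z = 0"
  shows "z \<in> \<int>"
proof -
  obtain x y :: int where z: "z = of_int x + of_int y * omega_d d"
    using assms(1) by (meson OdE)
  have "of_int y * omega_d d = 0"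
  proof (cases "d = 0")
    case False
    then have "Im (omega_d d) \<noteq> 0" by (simp add: omega_d_def)
    then show ?thesis using assms(2) by (simp add: z)
  qed (simp add: omega_d_def)
  then have "z = of_int x" by (simp add: z)
  then show ?thesis by simp
qed

lemma Od_mult_cnj_Ints: "b \<in> Od d \<Longrightarrow> b * cnj b \<in> \<int>"
  using Od_real_Ints[of "b * cnj b" d] by simp

lemma units_Od_norm:
  assumes "u \<in> units_Od d"
  shows "cmod u = 1"
proof -
  have u: "u \<in> Od d" "u \<noteq> 0" "inverse u \<in> Od d"
    using assms by (auto simp: units_Od_def)
  obtain n m :: int
    where n: "u * cnj u = of_int n" and m: "inverse u * cnj (inverse u) = of_int m"
    using Od_mult_cnj_Ints[OF u(1)] Od_mult_cnj_Ints[OF u(3)] by (metis Ints_cases)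
  have "of_int (n * m) = (u * cnj u) * (inverse u * cnj (inverse u))"
    by (simp only: of_int_mult n m)
  also have "\<dots> = 1"
    using u(2) by (simp add: complex_cnj_inverse field_simps)
  finally have "n * m = 1" by (metis of_int_eq_1_iff)
  moreover have norm_u: "(cmod u)\<^sup>2 = of_int n"
    using n by (metis complex_norm_square of_real_eq_iff of_real_of_int_eq)
  then have "0 \<le> n" by (metis of_int_0_le_iff zero_le_power2)
  ultimately have "n = 1" using pos_zmult_eq_1_iff[of n m] by (cases "n = 0") auto
  then show ?thesis using norm_u norm_ge_zero[of u] by (auto simp: power2_eq_1_iff)
qed

lemma finite_Od_cball:
  assumes "0 < d"
  shows "finite {b \<in> Od d. cmod b \<le> r}"
proof -
  define N where "N = \<lceil>2 * r\<rceil>"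
  have "1 \<le> sqrt (real d)" using assms by simp
  moreover have "Im (omega_d d) = sqrt (real d) / 2 \<or> Im (omega_d d) = sqrt (real d)"
    by (simp add: omega_d_def)
  ultimately have Im: "1 / 2 \<le> Im (omega_d d)" by linarith
  have Re: "\<bar>Re (omega_d d)\<bar> \<le> 1 / 2" by (simp add: omega_d_def)
  have "{b \<in> Od d. cmod b \<le> r} \<subseteq>
      (\<lambda>(x, y). of_int x + of_int y * omega_d d) ` ({-N..N} \<times> {-N..N})"
  proof
    fix b assume b: "b \<in> {b \<in> Od d. cmod b \<le> r}"
    then obtain x y :: int where xy: "b = of_int x + of_int y * omega_d d"
      by (auto elim: OdE)
    have "\<bar>Im b\<bar> \<le> r" "\<bar>Re b\<bar> \<le> r"
      using b abs_Im_le_cmod abs_Re_le_cmod by (auto intro: order_trans)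
    then have Im_b: "\<bar>of_int y\<bar> * Im (omega_d d) \<le> r"
      and Re_b: "\<bar>of_int x + of_int y * Re (omega_d d)\<bar> \<le> r"
      using Im by (simp_all add: xy abs_mult)
    have "\<bar>real_of_int y\<bar> * (1 / 2) \<le> \<bar>of_int y\<bar> * Im (omega_d d)"
      by (rule mult_left_mono[OF Im abs_ge_zero])
    with Im_b have y: "\<bar>real_of_int y\<bar> \<le> 2 * r" by linarith
    have "\<bar>real_of_int y\<bar> * \<bar>Re (omega_d d)\<bar> \<le> \<bar>real_of_int y\<bar> * (1 / 2)"
      by (rule mult_left_mono[OF Re abs_ge_zero])
    moreover have "\<bar>real_of_int x\<bar> \<le>
        \<bar>of_int x + of_int y * Re (omega_d d)\<bar> + \<bar>of_int y * Re (omega_d d)\<bar>"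
      using abs_triangle_ineq4[of "of_int x + of_int y * Re (omega_d d)" "of_int y * Re (omega_d d)"]
      by simp
    ultimately have "\<bar>real_of_int x\<bar> \<le> 2 * r"
      using Re_b y by (simp add: abs_mult)
    with y have "\<bar>x\<bar> \<le> N" "\<bar>y\<bar> \<le> N"
      unfolding N_def le_ceiling_iff by simp_all
    then show "b \<in> (\<lambda>(x, y). of_int x + of_int y * omega_d d) ` ({-N..N} \<times> {-N..N})"
      using xy by (auto intro!: image_eqI[of _ _ "(x, y)"])
  qed
  then show ?thesis by (rule finite_subset) simp
qed

section \<open>Integral binary Hermitian forms\<close>

lemma mult_cnj_eq_1: "cmod z = 1 \<Longrightarrow> z * cnj z = 1"
  by (metis complex_norm_square of_real_1 power_one)

(* (A, B, C) stands for the Hermitian form Q(x, y) = A |x|^2 + B x conj y + conj B conj x y + C |y|^2,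
   with sesquilinear form hpair and values hval; hform_poly is Q(z, 1) with conj z replaced by the
   independent variable w, and hform_act Q a b c e is Q o g for g = mat2 a b c e. *)
type_synonym hform = "real \<times> complex \<times> real"

fun hform_poly :: "hform \<Rightarrow> complex \<Rightarrow> complex \<Rightarrow> complex" where
  "hform_poly (A, B, C) z w = of_real A * z * w + B * z + cnj B * w + of_real C"

fun hpair :: "hform \<Rightarrow> complex \<times> complex \<Rightarrow> complex \<times> complex \<Rightarrow> complex" where
  "hpair (A, B, C) (x, y) (x', y') =
     of_real A * x * cnj x' + B * x * cnj y' + cnj B * y * cnj x' + of_real C * y * cnj y'"

definition hval :: "hform \<Rightarrow> complex \<times> complex \<Rightarrow> real" where
  "hval Q v = Re (hpair Q v v)"

fun hdisc :: "hform \<Rightarrow> complex" where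
  "hdisc (A, B, C) = B * cnj B - of_real A * of_real C"

definition hform_act :: "hform \<Rightarrow> complex \<Rightarrow> complex \<Rightarrow> complex \<Rightarrow> complex \<Rightarrow> hform" where
  "hform_act Q a b c e = (hval Q (a, c), hpair Q (a, c) (b, e), hval Q (b, e))"

lemma cnj_hpair: "cnj (hpair Q u v) = hpair Q v u"
  by (cases Q; cases u; cases v) (simp add: algebra_simps)

lemma of_real_hval: "of_real (hval Q v) = hpair Q v v"
proof -
  have "cnj (hpair Q v v) = hpair Q v v" by (rule cnj_hpair)
  then show ?thesis unfolding hval_def by (metis Reals_cnj_iff Re_complex_of_real Reals_cases)
qed

lemma hpair_act:
  "hpair (hform_act Q a b c e) (x, y) (x', y') =
     hpair Q (a * x + b * y, c * x + e * y) (a * x' + b * y', c * x' + e * y')"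
proof -
  obtain A B C where Q: "Q = (A, B, C)" by (cases Q)
  show ?thesis
    by (simp add: hform_act_def of_real_hval cnj_hpair Q) algebra
qed

lemma hval_act: "hval (hform_act Q a b c e) (x, y) = hval Q (a * x + b * y, c * x + e * y)"
  by (simp add: hval_def hpair_act)

lemma hval_scale: "hval Q (l * x, l * y) = (cmod l)\<^sup>2 * hval Q (x, y)"
proof -
  have "hpair Q (l * x, l * y) (l * x, l * y) = (l * cnj l) * hpair Q (x, y) (x, y)"
    by (cases Q) (simp add: algebra_simps)
  then show ?thesis
    by (simp add: hval_def flip: complex_norm_square)
qed

lemma hdisc_act: "hdisc (hform_act Q a b c e) = (a * e - b * c) * cnj (a * e - b * c) * hdisc Q"
proof -
  obtain A B C where Q: "Q = (A, B, C)" by (cases Q)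
  show ?thesis
    by (simp add: hform_act_def of_real_hval cnj_hpair Q) algebra
qed

lemma hform_poly_act:
  assumes "c * z + e \<noteq> 0" "cnj c * w + cnj e \<noteq> 0"
  shows "(c * z + e) * (cnj c * w + cnj e) *
      hform_poly Q ((a * z + b) / (c * z + e)) ((cnj a * w + cnj b) / (cnj c * w + cnj e))
    = hform_poly (hform_act Q a b c e) z w"
proof -
  obtain A B C where Q: "Q = (A, B, C)" by (cases Q)
  have clear_denominators: "X * Y * (A' * (p / X) * (q / Y) + B * (p / X) + B' * (q / Y) + C') =
      A' * p * q + B * p * Y + B' * X * q + C' * X * Y"
    if "X \<noteq> 0" "Y \<noteq> 0" for X Y p q A' B' C' :: complex
    using that by (simp add: field_simps)
  have "(c * z + e) * (cnj c * w + cnj e) *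
      hform_poly Q ((a * z + b) / (c * z + e)) ((cnj a * w + cnj b) / (cnj c * w + cnj e)) =
      of_real A * (a * z + b) * (cnj a * w + cnj b) + B * (a * z + b) * (cnj c * w + cnj e)
      + cnj B * (c * z + e) * (cnj a * w + cnj b) + of_real C * (c * z + e) * (cnj c * w + cnj e)"
    unfolding Q hform_poly.simps by (rule clear_denominators[OF assms])
  also have "\<dots> = hform_poly (hform_act Q a b c e) z w"
    by (simp add: hform_act_def of_real_hval cnj_hpair Q) algebra
  finally show ?thesis .
qed

lemma hform_act_adj:
  assumes "cmod (a * e - b * c) = 1"
  shows "hform_act (hform_act Q a b c e) e (- b) (- c) a = Q"
proof -
  obtain A B C where Q: "Q = (A, B, C)" by (cases Q)
  define D where "D = a * e - b * c"
  have D: "D * cnj D = 1"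
    using assms unfolding D_def by (rule mult_cnj_eq_1)
  have "hval (hform_act Q a b c e) (e, - c) = hval Q (D * 1, D * 0)"
    and "hval (hform_act Q a b c e) (- b, a) = hval Q (D * 0, D * 1)"
    by (simp_all add: hval_act D_def algebra_simps)
  then have "hval (hform_act Q a b c e) (e, - c) = A" "hval (hform_act Q a b c e) (- b, a) = C"
    using assms by (simp_all only: hval_scale D_def) (simp_all add: Q hval_def)
  moreover have "hpair (hform_act Q a b c e) (e, - c) (- b, a) = B"
    using D by (simp add: hpair_act Q D_def[symmetric] algebra_simps)
  ultimately show ?thesis
    unfolding hform_act_def[of "hform_act Q a b c e" e "- b" "- c" a] by (simp add: Q)
qed

lemma Od_of_real_Ints: "A \<in> \<int> \<Longrightarrow> of_real A \<in> Od d"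
  by (auto elim: Ints_cases)

definition hforms :: "nat \<Rightarrow> int \<Rightarrow> hform set" where
  "hforms d \<Delta> = {(A, B, C). A \<in> \<int> \<and> B \<in> Od d \<and> C \<in> \<int> \<and> hdisc (A, B, C) = of_int \<Delta>}"

lemma hpair_Od:
  assumes "Q \<in> hforms d \<Delta>" "x \<in> Od d" "y \<in> Od d" "x' \<in> Od d" "y' \<in> Od d"
  shows "hpair Q (x, y) (x', y') \<in> Od d"
  using assms by (cases Q) (auto simp: hforms_def Od_of_real_Ints)

lemma hval_Ints:
  assumes "Q \<in> hforms d \<Delta>" "x \<in> Od d" "y \<in> Od d"
  shows "hval Q (x, y) \<in> \<int>"
proof -
  have "hpair Q (x, y) (x, y) \<in> \<int>"
    using Od_real_Ints[OF hpair_Od[OF assms assms(2,3)]] by (metis Im_complex_of_real of_real_hval)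
  then show ?thesis by (auto simp: hval_def elim!: Ints_cases)
qed

lemma hform_act_hforms:
  assumes "Q \<in> hforms d \<Delta>" "a \<in> Od d" "b \<in> Od d" "c \<in> Od d" "e \<in> Od d"
    and "cmod (a * e - b * c) = 1"
  shows "hform_act Q a b c e \<in> hforms d \<Delta>"
proof -
  have "(a * e - b * c) * cnj (a * e - b * c) = 1"
    using assms(6) by (rule mult_cnj_eq_1)
  then have "hdisc (hform_act Q a b c e) = of_int \<Delta>"
    using assms(1) by (cases Q) (simp add: hdisc_act hforms_def)
  then show ?thesis
    using assms by (simp add: hforms_def hform_act_def hval_Ints hpair_Od)
qed

lemma uminus_hforms: "Q \<in> hforms d \<Delta> \<Longrightarrow> - Q \<in> hforms d \<Delta>"
  by (cases Q) (simp add: hforms_def)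

lemma hval_uminus: "hval (- Q) v = - hval Q v"
  by (cases Q; cases v) (simp add: hval_def)

lemma hform_poly_uminus: "hform_poly (- Q) z w = - hform_poly Q z w"
  by (cases Q) simp

(* Completing the square, C Q(x, y) = |B x + C y|^2 - Delta |x|^2 and
   A Q(x, y) = |A x + conj B y|^2 - Delta |y|^2. *)
lemma hval_nonzero:
  assumes Q: "Q \<in> hforms d \<Delta>" and not_norm: "\<forall>\<beta> \<in> Od d. \<beta> * cnj \<beta> \<noteq> of_int \<Delta>"
    and "x \<in> Od d" "y \<in> Od d" and unit: "x \<in> units_Od d \<or> y \<in> units_Od d"
  shows "hval Q (x, y) \<noteq> 0"
proof
  assume "hval Q (x, y) = 0"
  then have zero: "hpair Q (x, y) (x, y) = 0" by (metis of_real_0 of_real_hval)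
  obtain A B C where Q_eq: "Q = (A, B, C)" by (cases Q)
  have ABC: "of_real A \<in> Od d" "B \<in> Od d" "of_real C \<in> Od d" "hdisc Q = of_int \<Delta>"
    using Q by (auto simp: Q_eq hforms_def Od_of_real_Ints)
  have unit_norm: "u * cnj u = 1" if "u \<in> units_Od d" for u
    using units_Od_norm[OF that] by (rule mult_cnj_eq_1)
  from unit show False
  proof
    assume "x \<in> units_Od d"
    have "of_real C * hpair Q (x, y) (x, y) =
        (B * x + of_real C * y) * cnj (B * x + of_real C * y) - hdisc Q * (x * cnj x)"
      by (simp add: Q_eq) algebra
    then have "(B * x + of_real C * y) * cnj (B * x + of_real C * y) = of_int \<Delta>"
      using zero ABC unit_norm[OF \<open>x \<in> units_Od d\<close>] by simp
    moreover have "B * x + of_real C * y \<in> Od d"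
      using ABC assms(3,4) by simp
    ultimately show False using not_norm by blast
  next
    assume "y \<in> units_Od d"
    have "of_real A * hpair Q (x, y) (x, y) =
        (of_real A * x + cnj B * y) * cnj (of_real A * x + cnj B * y) - hdisc Q * (y * cnj y)"
      by (simp add: Q_eq) algebra
    then have "(of_real A * x + cnj B * y) * cnj (of_real A * x + cnj B * y) = of_int \<Delta>"
      using zero ABC unit_norm[OF \<open>y \<in> units_Od d\<close>] by simp
    moreover have "of_real A * x + cnj B * y \<in> Od d"
      using ABC assms(3,4) by simp
    ultimately show False using not_norm by blast
  qed
qed

section \<open>Sums over the forms with given signs at two cusps\<close>

(* A cusp x/y is given by homogeneous coordinates (x, y): infinity = (1, 0) and 0 = (0, 1). *)
definition cusp_forms :: "nat \<Rightarrow> int \<Rightarrow> complex \<times> complex \<Rightarrow> complex \<times> complex \<Rightarrow> hform set" where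
  "cusp_forms d \<Delta> \<alpha> \<beta> = {Q \<in> hforms d \<Delta>. 0 < hval Q \<alpha> \<and> hval Q \<beta> < 0}"

definition cusp_sum ::
  "nat \<Rightarrow> nat \<Rightarrow> int \<Rightarrow> complex \<times> complex \<Rightarrow> complex \<times> complex \<Rightarrow> complex \<Rightarrow> complex \<Rightarrow> complex"
where
  "cusp_sum d k \<Delta> \<alpha> \<beta> z w = (\<Sum>Q \<in> cusp_forms d \<Delta> \<alpha> \<beta>. hform_poly Q z w ^ k)"

lemma hval_1_0 [simp]: "hval (A, B, C) (1, 0) = A"
  and hval_0_1 [simp]: "hval (A, B, C) (0, 1) = C"
  by (simp_all add: hval_def)

lemma Pk_eq_cusp_sum: "Pk d k \<Delta> z w = cusp_sum d k \<Delta> (1, 0) (0, 1) z w"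
  unfolding Pk_def cusp_sum_def
proof (rule sum.reindex_bij_witness[where j = "\<lambda>(a, b, c). (of_int a, b, of_int c)"
      and i = "\<lambda>(A, B, C). (\<lfloor>A\<rfloor>, B, \<lfloor>C\<rfloor>)"])
  show "(\<lambda>(A, B, C). (\<lfloor>A\<rfloor>, B, \<lfloor>C\<rfloor>)) Q \<in> Pidx d \<Delta>"
    if "Q \<in> cusp_forms d \<Delta> (1, 0) (0, 1)" for Q
    using that by (auto simp: cusp_forms_def hforms_def Pidx_def elim!: Ints_cases)
  show "(\<lambda>(a, b, c). (real_of_int a, b, real_of_int c))
      ((\<lambda>(A, B, C). (\<lfloor>A\<rfloor>, B, \<lfloor>C\<rfloor>)) Q) = Q"
    if "Q \<in> cusp_forms d \<Delta> (1, 0) (0, 1)" for Q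
    using that by (auto simp: cusp_forms_def hforms_def elim!: Ints_cases)
qed (auto simp: cusp_forms_def hforms_def Pidx_def)

lemma finite_cusp_forms_infinity_zero:
  assumes "0 < d"
  shows "finite (cusp_forms d \<Delta> (1, 0) (0, 1))"
proof -
  let ?embed = "\<lambda>(a, B, c). (real_of_int a, B, real_of_int c)"
  have "cusp_forms d \<Delta> (1, 0) (0, 1) \<subseteq>
      ?embed ` ({1..\<Delta>} \<times> {B \<in> Od d. cmod B \<le> of_int \<Delta>} \<times> {-\<Delta>..-1})"
  proof
    fix Q assume "Q \<in> cusp_forms d \<Delta> (1, 0) (0, 1)"
    then obtain a c :: int and B where Q: "Q = (of_int a, B, of_int c)" and B: "B \<in> Od d"
      and ac: "0 < a" "c < 0" and disc: "B * cnj B - of_int a * of_int c = of_int \<Delta>"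
      by (auto simp: cusp_forms_def hforms_def elim!: Ints_cases)
    have "of_real ((cmod B)\<^sup>2) = (of_int (\<Delta> + a * c) :: complex)"
      unfolding complex_norm_square using disc by (simp add: algebra_simps)
    then have norm_B: "(cmod B)\<^sup>2 = of_int (\<Delta> + a * c)"
      by (metis of_real_eq_iff of_real_of_int_eq)
    have "a \<le> - (a * c)" "- c \<le> - (a * c)"
      using ac mult_left_mono[of 1 "- c" a] mult_right_mono[of 1 a "- c"] by simp_all
    moreover have "0 \<le> \<Delta> + a * c"
      using norm_B by (metis of_int_0_le_iff zero_le_power2)
    ultimately have a: "a \<in> {1..\<Delta>}" and c: "c \<in> {-\<Delta>..-1}"
      using ac unfolding atLeastAtMost_iff by linarith+
    have "real_of_int a * real_of_int c < 0" using ac by (simp add: mult_pos_neg)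
    then have "(cmod B)\<^sup>2 \<le> of_int \<Delta> * 1" using norm_B by simp
    also have "\<dots> \<le> (of_int \<Delta>)\<^sup>2"
      unfolding power2_eq_square using a by (intro mult_left_mono) auto
    finally have "(cmod B)\<^sup>2 \<le> (of_int \<Delta>)\<^sup>2" .
    moreover have "0 \<le> real_of_int \<Delta>" using a by simp
    ultimately have "cmod B \<le> of_int \<Delta>" by (rule power2_le_imp_le)
    then show "Q \<in> ?embed ` ({1..\<Delta>} \<times> {B \<in> Od d. cmod B \<le> of_int \<Delta>} \<times> {-\<Delta>..-1})"
      using Q B a c by (auto intro!: image_eqI[of _ _ "(a, B, c)"])
  qed
  moreover have "finite {B \<in> Od d. cmod B \<le> of_int \<Delta>}"
    by (rule finite_Od_cball[OF assms])
  ultimately show ?thesis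
    by (auto intro: finite_subset)
qed

lemma cusp_forms_act:
  assumes "a \<in> Od d" "b \<in> Od d" "c \<in> Od d" "e \<in> Od d" and det: "cmod (a * e - b * c) = 1"
  shows "cusp_forms d \<Delta> (e, - c) (- b, a) =
    (\<lambda>Q. hform_act Q a b c e) ` cusp_forms d \<Delta> (1, 0) (0, 1)"
proof -
  have adj: "cmod (e * a - (- b) * (- c)) = 1" using det by (simp add: mult.commute)
  have "hval (hform_act Q a b c e) (e, - c) = hval Q (1, 0)"
    and "hval (hform_act Q a b c e) (- b, a) = hval Q (0, 1)" for Q
    using hval_scale[of Q "a * e - b * c" 1 0] hval_scale[of Q "a * e - b * c" 0 1] det
    by (simp_all add: hval_act algebra_simps)
  moreover have "hval (hform_act Q e (- b) (- c) a) (1, 0) = hval Q (e, - c)"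
    and "hval (hform_act Q e (- b) (- c) a) (0, 1) = hval Q (- b, a)" for Q
    by (simp_all add: hval_act)
  moreover have "hform_act (hform_act Q e (- b) (- c) a) a b c e = Q" for Q
    using hform_act_adj[OF adj, of Q] by simp
  ultimately show ?thesis
    using assms adj unfolding cusp_forms_def
    by (auto intro!: hform_act_hforms image_eqI[of _ _ "hform_act _ e (- b) (- c) a"])
qed

lemma mat2_nth [simp]:
  "mat2 a b c e $ 1 $ 1 = a" "mat2 a b c e $ 1 $ 2 = b"
  "mat2 a b c e $ 2 $ 1 = c" "mat2 a b c e $ 2 $ 2 = e"
  by (simp_all add: mat2_def)

lemma mat2_mult:
  "mat2 a b c e ** mat2 a' b' c' e' =
     mat2 (a * a' + b * c') (a * b' + b * e') (c * a' + e * c') (c * b' + e * e')"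
  by (simp add: vec_eq_iff forall_2 matrix_matrix_mult_def sum_2)

(* (e, -c) and (-b, a) are the images of infinity and 0 under the adjugate of g = mat2 a b c e,
   a unit multiple of g^-1. *)
lemma slash_Pk_eq_cusp_sum:
  assumes "a \<in> Od d" "b \<in> Od d" "c \<in> Od d" "e \<in> Od d" and det: "cmod (a * e - b * c) = 1"
    and "regular_at (mat2 a b c e) z w"
  shows "slash k (mat2 a b c e) (Pk d k \<Delta>) z w = cusp_sum d k \<Delta> (e, - c) (- b, a) z w"
proof -
  let ?F = "cusp_forms d \<Delta> (1, 0) (0, 1)"
  have reg: "c * z + e \<noteq> 0" "cnj c * w + cnj e \<noteq> 0"
    using assms(6) by (simp_all add: regular_at_def)
  have "slash k (mat2 a b c e) (Pk d k \<Delta>) z w =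
      (\<Sum>Q \<in> ?F. ((c * z + e) * (cnj c * w + cnj e) *
        hform_poly Q ((a * z + b) / (c * z + e)) ((cnj a * w + cnj b) / (cnj c * w + cnj e))) ^ k)"
    by (simp add: slash_def Pk_eq_cusp_sum cusp_sum_def sum_distrib_left power_mult_distrib)
  also have "\<dots> = (\<Sum>Q \<in> ?F. hform_poly (hform_act Q a b c e) z w ^ k)"
    by (simp only: hform_poly_act[OF reg])
  also have "\<dots> = (\<Sum>Q \<in> (\<lambda>Q. hform_act Q a b c e) ` ?F. hform_poly Q z w ^ k)"
  proof (rule sum.reindex[symmetric, unfolded comp_def])
    show "inj_on (\<lambda>Q. hform_act Q a b c e) ?F"
      by (rule inj_on_inverseI[where g = "\<lambda>Q. hform_act Q e (- b) (- c) a"])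
        (rule hform_act_adj[OF det])
  qed
  also have "\<dots> = cusp_sum d k \<Delta> (e, - c) (- b, a) z w"
    by (simp add: cusp_sum_def cusp_forms_act[OF assms(1-5)])
  finally show ?thesis .
qed

lemma finite_cusp_forms_act:
  assumes "0 < d" "a \<in> Od d" "b \<in> Od d" "c \<in> Od d" "e \<in> Od d" "cmod (a * e - b * c) = 1"
  shows "finite (cusp_forms d \<Delta> (e, - c) (- b, a))"
  using assms by (simp add: cusp_forms_act finite_cusp_forms_infinity_zero)

lemma cusp_forms_scale:
  assumes "cmod l = 1"
  shows "cusp_forms d \<Delta> (l * x, l * y) \<beta> = cusp_forms d \<Delta> (x, y) \<beta>"
    and "cusp_forms d \<Delta> \<alpha> (l * x, l * y) = cusp_forms d \<Delta> \<alpha> (x, y)"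
  using assms by (simp_all add: cusp_forms_def hval_scale)

lemma cusp_sum_scale:
  assumes "cmod l = 1"
  shows "cusp_sum d k \<Delta> (l * x, l * y) \<beta> z w = cusp_sum d k \<Delta> (x, y) \<beta> z w"
    and "cusp_sum d k \<Delta> \<alpha> (l * x, l * y) z w = cusp_sum d k \<Delta> \<alpha> (x, y) z w"
  by (simp_all add: cusp_sum_def cusp_forms_scale[OF assms])

lemma cusp_forms_subset_Un:
  assumes "\<forall>Q \<in> hforms d \<Delta>. hval Q \<beta> \<noteq> 0"
  shows "cusp_forms d \<Delta> \<alpha> \<gamma> \<subseteq> cusp_forms d \<Delta> \<alpha> \<beta> \<union> cusp_forms d \<Delta> \<beta> \<gamma>"
  using assms by (auto simp: cusp_forms_def linorder_neq_iff)

lemma cusp_forms_negated: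
  assumes "\<forall>Q \<in> hforms d \<Delta>. hval Q \<alpha> \<noteq> 0 \<and> hval Q \<gamma> \<noteq> 0"
  shows "cusp_forms d \<Delta> \<beta> \<gamma> - cusp_forms d \<Delta> \<alpha> \<gamma> =
    uminus ` (cusp_forms d \<Delta> \<alpha> \<beta> - cusp_forms d \<Delta> \<alpha> \<gamma>)"
proof (intro equalityI subsetI)
  fix Q assume "Q \<in> cusp_forms d \<Delta> \<beta> \<gamma> - cusp_forms d \<Delta> \<alpha> \<gamma>"
  then have "- Q \<in> cusp_forms d \<Delta> \<alpha> \<beta> - cusp_forms d \<Delta> \<alpha> \<gamma>"
    using assms by (auto simp: cusp_forms_def hval_uminus uminus_hforms linorder_neq_iff
        simp del: uminus_Pair)
  then show "Q \<in> uminus ` (cusp_forms d \<Delta> \<alpha> \<beta> - cusp_forms d \<Delta> \<alpha> \<gamma>)"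
    by (metis image_eqI minus_minus)
qed (use assms in \<open>auto simp: cusp_forms_def hval_uminus uminus_hforms linorder_neq_iff
    simp del: uminus_Pair\<close>)

lemma cusp_sum_telescope:
  assumes "odd k"
    and nonzero: "\<forall>Q \<in> hforms d \<Delta>. hval Q \<alpha> \<noteq> 0 \<and> hval Q \<beta> \<noteq> 0 \<and> hval Q \<gamma> \<noteq> 0"
    and "finite (cusp_forms d \<Delta> \<alpha> \<beta>)" "finite (cusp_forms d \<Delta> \<beta> \<gamma>)"
  shows "cusp_sum d k \<Delta> \<alpha> \<beta> z w + cusp_sum d k \<Delta> \<beta> \<gamma> z w = cusp_sum d k \<Delta> \<alpha> \<gamma> z w"
proof -
  define f where "f Q = hform_poly Q z w ^ k" for Q
  define A1 where "A1 = cusp_forms d \<Delta> \<alpha> \<beta> \<inter> cusp_forms d \<Delta> \<alpha> \<gamma>"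
  define A2 where "A2 = cusp_forms d \<Delta> \<beta> \<gamma> \<inter> cusp_forms d \<Delta> \<alpha> \<gamma>"
  define X where "X = cusp_forms d \<Delta> \<alpha> \<beta> - cusp_forms d \<Delta> \<alpha> \<gamma>"
  have L1: "cusp_forms d \<Delta> \<alpha> \<beta> = A1 \<union> X"
    by (auto simp: A1_def X_def)
  have L2: "cusp_forms d \<Delta> \<beta> \<gamma> = A2 \<union> uminus ` X"
    using cusp_forms_negated[of d \<Delta> \<alpha> \<gamma> \<beta>] nonzero unfolding A2_def X_def by blast
  have R: "cusp_forms d \<Delta> \<alpha> \<gamma> = A1 \<union> A2"
    using cusp_forms_subset_Un[of d \<Delta> \<beta> \<alpha> \<gamma>] nonzero by (auto simp: A1_def A2_def)
  have fin: "finite A1" "finite X" "finite A2" "finite (uminus ` X)"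
    using assms(3,4) unfolding L1 L2 by auto
  have "sum f (uminus ` X) = sum (\<lambda>Q. f (- Q)) X"
    by (simp add: sum.reindex inj_on_def)
  also have "\<dots> = - sum f X"
    using \<open>odd k\<close> by (simp add: f_def hform_poly_uminus sum_negf)
  finally have cancel: "sum f (uminus ` X) = - sum f X" .
  have "A1 \<inter> X = {}" "A2 \<inter> uminus ` X = {}" "A1 \<inter> A2 = {}"
    by (auto simp: A1_def A2_def X_def cusp_forms_def hval_uminus simp del: uminus_Pair)
  then show ?thesis
    unfolding cusp_sum_def f_def[symmetric] L1 L2 R
    using fin cancel by (simp add: sum.union_disjoint)
qed

lemma Pk_swap: "Pk d k \<Delta> w z = Pk d k \<Delta> z w"
  unfolding Pk_def
  by (rule sum.reindex_bij_witness[where i = "\<lambda>(a, b, c). (a, cnj b, c)"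
        and j = "\<lambda>(a, b, c). (a, cnj b, c)"])
     (auto simp: Pidx_def algebra_simps)

lemma units_Od_in_Od: "u \<in> units_Od d \<Longrightarrow> u \<in> Od d"
  by (simp add: units_Od_def)

lemma units_Od_one [simp]: "1 \<in> units_Od d" and units_Od_minus_one [simp]: "- 1 \<in> units_Od d"
  by (simp_all add: units_Od_def)

lemma Pk_unit_invariant:
  assumes "u \<in> units_Od d"
  shows "Pk d k \<Delta> (u * z) (cnj u * w) = Pk d k \<Delta> z w"
proof -
  have u: "u \<in> Od d" "cmod u = 1"
    using assms by (simp_all add: units_Od_in_Od units_Od_norm)
  have "Pk d k \<Delta> (u * z) (cnj u * w) = slash k (mat2 u 0 0 1) (Pk d k \<Delta>) z w"
    by (simp add: slash_def)
  also have "\<dots> = cusp_sum d k \<Delta> (1, 0) (u * 0, u * 1) z w"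
    using u by (simp add: slash_Pk_eq_cusp_sum regular_at_def)
  also have "\<dots> = Pk d k \<Delta> z w"
    unfolding Pk_eq_cusp_sum by (rule cusp_sum_scale(2)[OF u(2)])
  finally show ?thesis .
qed

lemma cusp_sum_self: "cusp_sum d k \<Delta> \<alpha> \<alpha> z w = 0"
proof -
  have "cusp_forms d \<Delta> \<alpha> \<alpha> = {}" by (auto simp: cusp_forms_def)
  then show ?thesis by (simp add: cusp_sum_def)
qed

lemma Pk_S_relation:
  assumes "0 < d" and not_norm: "\<forall>\<beta> \<in> Od d. \<beta> * cnj \<beta> \<noteq> of_int \<Delta>" and "odd k"
    and "regular_at SM z w"
  shows "Pk d k \<Delta> z w + slash k SM (Pk d k \<Delta>) z w = 0"
proof -
  have S: "SM = mat2 0 (- 1) 1 0" by (simp add: SM_def)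
  have nonzero:
    "\<forall>Q \<in> hforms d \<Delta>. hval Q (1, 0) \<noteq> 0 \<and> hval Q (0, 1) \<noteq> 0 \<and> hval Q (1, 0) \<noteq> 0"
    using hval_nonzero[OF _ not_norm, where x = 1 and y = 0]
      hval_nonzero[OF _ not_norm, where x = 0 and y = 1] by simp
  have "finite (cusp_forms d \<Delta> (0, - 1) (1, 0))"
    using finite_cusp_forms_act[of d 0 "- 1" 1 0 \<Delta>] assms(1) by simp
  then have fin: "finite (cusp_forms d \<Delta> (0, 1) (1, 0))"
    using cusp_forms_scale(1)[of "- 1" d \<Delta> 0 1 "(1, 0)"] by simp
  have "slash k SM (Pk d k \<Delta>) z w = cusp_sum d k \<Delta> (0, - 1) (1, 0) z w"
    using assms(4) unfolding S by (simp add: slash_Pk_eq_cusp_sum)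
  also have "\<dots> = cusp_sum d k \<Delta> (0, 1) (1, 0) z w"
    using cusp_sum_scale(1)[of "- 1" d k \<Delta> 0 1 "(1, 0)"] by simp
  finally have "Pk d k \<Delta> z w + slash k SM (Pk d k \<Delta>) z w = cusp_sum d k \<Delta> (1, 0) (1, 0) z w"
    using cusp_sum_telescope[OF \<open>odd k\<close> nonzero finite_cusp_forms_infinity_zero[OF assms(1)] fin]
    by (simp add: Pk_eq_cusp_sum)
  also have "\<dots> = 0"
    by (rule cusp_sum_self)
  finally show ?thesis .
qed

lemma Pk_TSeps_relation:
  assumes "0 < d" and not_norm: "\<forall>\<beta> \<in> Od d. \<beta> * cnj \<beta> \<noteq> of_int \<Delta>" and "odd k"
    and "regular_at (TM ** SM ** epsM) z w"
  shows "Pk d k \<Delta> z w + slash k (TM ** SM ** epsM) (Pk d k \<Delta>) z w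
    - slash k TM (Pk d k \<Delta>) z w = 0"
proof -
  have TSe: "TM ** SM ** epsM = mat2 (- 1) (- 1) (- 1) 0"
    by (simp add: TM_def SM_def epsM_def mat2_mult)
  have T: "TM = mat2 1 1 0 1" by (simp add: TM_def)
  have nonzero:
    "\<forall>Q \<in> hforms d \<Delta>. hval Q (1, 0) \<noteq> 0 \<and> hval Q (0, 1) \<noteq> 0 \<and> hval Q (1, - 1) \<noteq> 0"
    using hval_nonzero[OF _ not_norm, where x = 1 and y = 0]
      hval_nonzero[OF _ not_norm, where x = 0 and y = 1]
      hval_nonzero[OF _ not_norm, where x = 1 and y = "- 1"] by simp
  have fin: "finite (cusp_forms d \<Delta> (0, 1) (1, - 1))"
    using finite_cusp_forms_act[of d "- 1" "- 1" "- 1" 0 \<Delta>] assms(1) by simp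
  have "slash k (TM ** SM ** epsM) (Pk d k \<Delta>) z w = cusp_sum d k \<Delta> (0, 1) (1, - 1) z w"
    using assms(4) unfolding TSe by (simp add: slash_Pk_eq_cusp_sum)
  moreover have "slash k TM (Pk d k \<Delta>) z w = cusp_sum d k \<Delta> (1, 0) (1, - 1) z w"
    using cusp_sum_scale(2)[of "- 1" d k \<Delta> "(1, 0)" 1 "- 1"]
    unfolding T by (simp add: slash_Pk_eq_cusp_sum regular_at_def)
  ultimately show ?thesis
    using cusp_sum_telescope[OF \<open>odd k\<close> nonzero finite_cusp_forms_infinity_zero[OF assms(1)] fin]
    by (simp add: Pk_eq_cusp_sum)
qed

lemma omega_7_sq: "omega_d 7 * omega_d 7 = omega_d 7 - 2"
proof -
  have "omega_d 7 + cnj (omega_d 7) = 1" and norm: "omega_d 7 * cnj (omega_d 7) = 2"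
    by (simp_all add: omega_d_add_cnj omega_d_mult_cnj)
  then have "cnj (omega_d 7) = 1 - omega_d 7"
    by (metis add_diff_cancel_left')
  then have "omega_d 7 * (1 - omega_d 7) = 2"
    using norm by simp
  then show ?thesis
    by (simp add: algebra_simps eq_diff_eq)
qed

lemma omega_7_matrices:
  shows "Tw (omega_d 7) = mat2 1 (omega_d 7) 0 1"
    and "SM ** TMinv ** Tw (omega_d 7) ** SM = mat2 (- 1) 0 (omega_d 7 - 1) (- 1)"
    and "TM ** Twinv (omega_d 7) ** SM ** Tw (omega_d 7) = mat2 (1 - omega_d 7) 1 1 (omega_d 7)"
  by (simp_all add: TM_def TMinv_def SM_def Tw_def Twinv_def mat2_mult algebra_simps omega_7_sq)

lemma cmod_det_omega_7: "cmod ((1 - omega_d 7) * omega_d 7 - 1 * 1) = 1"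
  by (simp add: algebra_simps omega_7_sq)

lemma slash_Pk_omega_7:
  assumes "regular_at (SM ** TMinv ** Tw (omega_d 7) ** SM) z w"
    and "regular_at (TM ** Twinv (omega_d 7) ** SM ** Tw (omega_d 7)) z w"
  shows "slash k (Tw (omega_d 7)) (Pk 7 k \<Delta>) z w = cusp_sum 7 k \<Delta> (1, 0) (- omega_d 7, 1) z w"
    and "slash k (SM ** TMinv ** Tw (omega_d 7) ** SM) (Pk 7 k \<Delta>) z w =
      cusp_sum 7 k \<Delta> (- 1, 1 - omega_d 7) (0, 1) z w"
    and "slash k (TM ** Twinv (omega_d 7) ** SM ** Tw (omega_d 7)) (Pk 7 k \<Delta>) z w =
      cusp_sum 7 k \<Delta> (- omega_d 7, 1) (- 1, 1 - omega_d 7) z w"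
proof -
  show "slash k (Tw (omega_d 7)) (Pk 7 k \<Delta>) z w = cusp_sum 7 k \<Delta> (1, 0) (- omega_d 7, 1) z w"
    unfolding omega_7_matrices(1) by (simp add: slash_Pk_eq_cusp_sum regular_at_def)
  show "slash k (SM ** TMinv ** Tw (omega_d 7) ** SM) (Pk 7 k \<Delta>) z w =
      cusp_sum 7 k \<Delta> (- 1, 1 - omega_d 7) (0, 1) z w"
    using assms(1) cusp_sum_scale(2)[of "- 1" 7 k \<Delta> "(- 1, 1 - omega_d 7)" 0 1]
    unfolding omega_7_matrices(2) by (simp add: slash_Pk_eq_cusp_sum)
  show "slash k (TM ** Twinv (omega_d 7) ** SM ** Tw (omega_d 7)) (Pk 7 k \<Delta>) z w =
      cusp_sum 7 k \<Delta> (- omega_d 7, 1) (- 1, 1 - omega_d 7) z w"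
    using assms(2) cusp_sum_scale(1)[of "- 1" 7 k \<Delta> "omega_d 7" "- 1" "(- 1, 1 - omega_d 7)"]
      slash_Pk_eq_cusp_sum[OF _ _ _ _ cmod_det_omega_7]
    unfolding omega_7_matrices(3) by simp
qed

lemma finite_cusp_forms_omega_7:
  shows "finite (cusp_forms 7 \<Delta> (1, 0) (- omega_d 7, 1))"
    and "finite (cusp_forms 7 \<Delta> (- omega_d 7, 1) (- 1, 1 - omega_d 7))"
    and "finite (cusp_forms 7 \<Delta> (- 1, 1 - omega_d 7) (0, 1))"
proof -
  show "finite (cusp_forms 7 \<Delta> (1, 0) (- omega_d 7, 1))"
    using finite_cusp_forms_act[of 7 1 "omega_d 7" 0 1 \<Delta>] by simp
  show "finite (cusp_forms 7 \<Delta> (- omega_d 7, 1) (- 1, 1 - omega_d 7))"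
    using finite_cusp_forms_act[of 7 "1 - omega_d 7" 1 1 "omega_d 7" \<Delta>, OF _ _ _ _ _ cmod_det_omega_7]
      cusp_forms_scale(1)[of "- 1" 7 \<Delta> "omega_d 7" "- 1" "(- 1, 1 - omega_d 7)"] by simp
  show "finite (cusp_forms 7 \<Delta> (- 1, 1 - omega_d 7) (0, 1))"
    using finite_cusp_forms_act[of 7 "- 1" 0 "omega_d 7 - 1" "- 1" \<Delta>]
      cusp_forms_scale(2)[of "- 1" 7 \<Delta> "(- 1, 1 - omega_d 7)" 0 1] by simp
qed

lemma Pk_omega_7_relation:
  assumes not_norm: "\<forall>\<beta> \<in> Od 7. \<beta> * cnj \<beta> \<noteq> of_int \<Delta>" and "odd k"
    and "regular_at (SM ** TMinv ** Tw (omega_d 7) ** SM) z w"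
    and "regular_at (TM ** Twinv (omega_d 7) ** SM ** Tw (omega_d 7)) z w"
  shows "Pk 7 k \<Delta> z w - slash k (Tw (omega_d 7)) (Pk 7 k \<Delta>) z w
    - slash k (SM ** TMinv ** Tw (omega_d 7) ** SM) (Pk 7 k \<Delta>) z w
    - slash k (TM ** Twinv (omega_d 7) ** SM ** Tw (omega_d 7)) (Pk 7 k \<Delta>) z w = 0"
proof -
  let ?c1 = "(- omega_d 7, 1)" and ?c2 = "(- 1, 1 - omega_d 7)"
  have nonzero: "\<forall>Q \<in> hforms 7 \<Delta>. hval Q v \<noteq> 0" if "v \<in> {(1, 0), (0, 1), ?c1, ?c2}" for v
    using that hval_nonzero[OF _ not_norm, where x = 1 and y = 0]
      hval_nonzero[OF _ not_norm, where x = 0 and y = 1]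
      hval_nonzero[OF _ not_norm, where x = "- omega_d 7" and y = 1]
      hval_nonzero[OF _ not_norm, where x = "- 1" and y = "1 - omega_d 7"] by auto
  note fin = finite_cusp_forms_omega_7[of \<Delta>]
  have "finite (cusp_forms 7 \<Delta> (1, 0) ?c2)"
    using cusp_forms_subset_Un[of 7 \<Delta> ?c1 "(1, 0)" ?c2] nonzero fin(1,2)
    by (auto intro: finite_subset)
  then have "cusp_sum 7 k \<Delta> (1, 0) ?c2 z w + cusp_sum 7 k \<Delta> ?c2 (0, 1) z w = Pk 7 k \<Delta> z w"
    unfolding Pk_eq_cusp_sum using nonzero by (intro cusp_sum_telescope[OF \<open>odd k\<close> _ _ fin(3)]) auto
  moreover have "cusp_sum 7 k \<Delta> (1, 0) ?c1 z w + cusp_sum 7 k \<Delta> ?c1 ?c2 z w =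
      cusp_sum 7 k \<Delta> (1, 0) ?c2 z w"
    using nonzero by (intro cusp_sum_telescope[OF \<open>odd k\<close> _ fin(1,2)]) auto
  ultimately have "Pk 7 k \<Delta> z w = cusp_sum 7 k \<Delta> (1, 0) ?c1 z w + cusp_sum 7 k \<Delta> ?c1 ?c2 z w
      + cusp_sum 7 k \<Delta> ?c2 (0, 1) z w"
    by simp
  then show ?thesis
    unfolding slash_Pk_omega_7[OF assms(3,4)] by simp
qed

theorem proposition2p8:
  fixes d k :: nat and \<Delta> :: int
  assumes hd: "d \<in> {1, 2, 3, 7, 11}"
    and hDpos: "\<Delta> > 0"
    and hDnorm: "\<forall>\<beta> \<in> Od d. \<beta> * cnj \<beta> \<noteq> of_int \<Delta>"
    and hk: "odd k"
  shows "(\<forall>z w. Pk d k \<Delta> w z = Pk d k \<Delta> z w)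
    \<and> (\<forall>u \<in> units_Od d. \<forall>z w. Pk d k \<Delta> (u * z) (cnj u * w) = Pk d k \<Delta> z w)
    \<and> (\<forall>z w. regular_at SM z w \<longrightarrow>
          Pk d k \<Delta> z w + slash k SM (Pk d k \<Delta>) z w = 0)
    \<and> (\<forall>z w. regular_at (TM ** SM ** epsM) z w \<and> regular_at TM z w \<longrightarrow>
          Pk d k \<Delta> z w + slash k (TM ** SM ** epsM) (Pk d k \<Delta>) z w
            - slash k TM (Pk d k \<Delta>) z w = 0)
    \<and> (d = 7 \<longrightarrow>
        (\<forall>z w. regular_at (Tw (omega_d 7)) z w
            \<and> regular_at (SM ** TMinv ** Tw (omega_d 7) ** SM) z w
            \<and> regular_at (TM ** Twinv (omega_d 7) ** SM ** Tw (omega_d 7)) z w \<longrightarrow>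
          Pk d k \<Delta> z w - slash k (Tw (omega_d 7)) (Pk d k \<Delta>) z w
            - slash k (SM ** TMinv ** Tw (omega_d 7) ** SM) (Pk d k \<Delta>) z w
            - slash k (TM ** Twinv (omega_d 7) ** SM ** Tw (omega_d 7)) (Pk d k \<Delta>) z w = 0))"
proof -
  have "0 < d" using hd by auto
  then show ?thesis
    using Pk_swap Pk_unit_invariant Pk_S_relation[OF _ hDnorm hk] Pk_TSeps_relation[OF _ hDnorm hk]
      Pk_omega_7_relation[OF _ hk] hDnorm
    by auto
qed

end
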